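(* Let $n\geq 2$ and let $\mathcal{G}=(\mathcal{V},\mathcal{E})$ be a directed graph on $\mathcal{V}=\{1,\ldots,n\}$ in which every node has at least one outgoing edge. Let $A=(a_{ij})\in\mathbb{R}^{n\times n}$ be its hyperlink matrix, let $m\in(0,1)$, and let $x^*\in\mathbb{R}^n$ be the PageRank vector. Consider the iteration with initial states $x(0)=z(0)=\frac{m}{n}\mathbf{1}_n$ and, for $k\geq 0$, $$x(k+1)=x(k)+(1-m)Az(k),\qquad z(k+1)=(1-m)Az(k).$$ Then: (i) $z(k)\to 0$ as $k\to\infty$; (ii) $x(k)\leq x(k+1)\leq x^*$ for all $k\geq 0$; (iii) $x(k)\to x^*$ as $k\to\infty$.
   Context: Write $(i,j)\in\mathcal{E}$ if node (page) $i$ has a link to page $j$. $\mathcal{L}_j^{\text{out}}=\{i:(j,i)\in\mathcal{E}\}$ and $n_j=|\mathcal{L}_j^{\text{out}}|\geq 1$. The hyperlink matrix is defined by $a_{ij}=1/n_j$ if $i\in\mathcal{L}_j^{\text{out}}$ and $a_{ij}=0$ otherwise; it is column stochastic. The PageRank vector $x^*$ is the vector satisfying $x^*=(1-m)Ax^*+\frac{m}{n}\mathbf{1}_n$ and $\mathbf{1}_n^Tx^*=1$, where $\mathbf{1}_n$ is the all-ones vector. Inequalities between vectors are entrywise. *)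

theory Defs
  imports "HOL-Analysis.Analysis"
begin

text \<open>Directed graph on the finite node type 'n: E j i means page j links to page i,
  i.e. (j,i) is an edge.\<close>

definition out_links :: "('n \<Rightarrow> 'n \<Rightarrow> bool) \<Rightarrow> 'n \<Rightarrow> 'n set" where
  "out_links E j = {i. E j i}"

definition hyperlink :: "('n::finite \<Rightarrow> 'n \<Rightarrow> bool) \<Rightarrow> real^'n^'n" where
  "hyperlink E = (\<chi> i j. if i \<in> out_links E j then 1 / real (card (out_links E j)) else 0)"

definition is_pagerank :: "('n::finite \<Rightarrow> 'n \<Rightarrow> bool) \<Rightarrow> real \<Rightarrow> real^'n \<Rightarrow> bool" where
  "is_pagerank E m x \<longleftrightarrow>
     x = (1 - m) *\<^sub>R (hyperlink E *v x) + (\<chi> i. m / real CARD('n)) \<and> (\<Sum>i\<in>UNIV. x $ i) = 1"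

end

theory Submission
  imports Defs
begin

text \<open>The hyperlink matrix A is nonnegative and column stochastic, hence nonexpansive for the
  1-norm, so iterates of the recursion w(k+1) = (1-m) A w(k) decay geometrically; this gives (i).
  Since x(k+1) - x(k) = z(k+1), x is the sequence of partial sums of z and satisfies
  x(k+1) = m/n 1 + (1-m) A x(k). The PageRank vector is the fixed point of the same affine map, so
  the error x* - x(k) obeys the contracting recursion too, which gives (iii). The z(k) are
  nonnegative, so x is monotone, and a monotone sequence lies below its limit, which gives (ii).\<close>

definition column_stochastic :: "real^'n^'m \<Rightarrow> bool" where
  "column_stochastic A \<longleftrightarrow> (\<forall>i j. 0 \<le> A $ i $ j) \<and> (\<forall>j. (\<Sum>i\<in>UNIV. A $ i $ j) = 1)"

lemma column_stochastic_hyperlink: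
  assumes "\<forall>j. out_links E j \<noteq> {}"
  shows "column_stochastic (hyperlink E)"
proof -
  have "(\<Sum>i\<in>UNIV. hyperlink E $ i $ j) = 1" for j
  proof -
    have "(\<Sum>i\<in>UNIV. hyperlink E $ i $ j) = (\<Sum>i\<in>out_links E j. 1 / real (card (out_links E j)))"
      by (simp add: hyperlink_def sum.If_cases)
    also have "\<dots> = 1"
      using assms by simp
    finally show ?thesis .
  qed
  then show ?thesis
    by (simp add: column_stochastic_def hyperlink_def)
qed

lemma matrix_vector_mult_nonneg:
  fixes A :: "real^'n^'m"
  assumes "\<forall>i j. 0 \<le> A $ i $ j" and "\<forall>j. 0 \<le> v $ j"
  shows "0 \<le> (A *v v) $ i"
  unfolding matrix_vector_mult_def using assms by (auto intro!: sum_nonneg)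

definition l1_norm :: "real^'n \<Rightarrow> real" where
  "l1_norm v = (\<Sum>i\<in>UNIV. \<bar>v $ i\<bar>)"

lemma abs_nth_le_l1_norm: "\<bar>v $ i\<bar> \<le> l1_norm v"
  unfolding l1_norm_def by (rule member_le_sum) auto

lemma l1_norm_scaleR: "l1_norm (c *\<^sub>R v) = \<bar>c\<bar> * l1_norm v"
  by (simp add: l1_norm_def abs_mult sum_distrib_left)

lemma l1_norm_column_stochastic_le:
  assumes "column_stochastic A"
  shows "l1_norm (A *v v) \<le> l1_norm v"
proof -
  have nonneg: "0 \<le> A $ i $ j" for i j
    using assms by (simp add: column_stochastic_def)
  have "l1_norm (A *v v) = (\<Sum>i\<in>UNIV. \<bar>\<Sum>j\<in>UNIV. A $ i $ j * v $ j\<bar>)"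
    by (simp add: l1_norm_def matrix_vector_mult_def)
  also have "\<dots> \<le> (\<Sum>i\<in>UNIV. \<Sum>j\<in>UNIV. A $ i $ j * \<bar>v $ j\<bar>)"
  proof (rule sum_mono)
    fix i
    show "\<bar>\<Sum>j\<in>UNIV. A $ i $ j * v $ j\<bar> \<le> (\<Sum>j\<in>UNIV. A $ i $ j * \<bar>v $ j\<bar>)"
      using sum_abs[of "\<lambda>j. A $ i $ j * v $ j" UNIV] by (simp add: abs_mult nonneg)
  qed
  also have "\<dots> = (\<Sum>j\<in>UNIV. (\<Sum>i\<in>UNIV. A $ i $ j) * \<bar>v $ j\<bar>)"
    by (subst sum.swap) (simp add: sum_distrib_right)
  also have "\<dots> = l1_norm v"
    using assms by (simp add: column_stochastic_def l1_norm_def)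
  finally show ?thesis .
qed

lemma column_stochastic_iteration_tendsto_zero:
  fixes w :: "nat \<Rightarrow> real^'n"
  assumes "column_stochastic A" and "\<bar>c\<bar> < 1"
    and "\<And>k. w (Suc k) = c *\<^sub>R (A *v w k)"
  shows "w \<longlonglongrightarrow> 0"
proof (rule vec_tendstoI)
  fix i
  have decay: "l1_norm (w k) \<le> \<bar>c\<bar> ^ k * l1_norm (w 0)" for k
  proof (induction k)
    case 0
    then show ?case by simp
  next
    case (Suc k)
    have "l1_norm (w (Suc k)) \<le> \<bar>c\<bar> * l1_norm (w k)"
      using assms(3) l1_norm_column_stochastic_le[OF assms(1)]
      by (simp add: l1_norm_scaleR mult_left_mono)
    also have "\<dots> \<le> \<bar>c\<bar> ^ Suc k * l1_norm (w 0)"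
      using mult_left_mono[OF Suc.IH abs_ge_zero[of c]] by (simp add: mult.assoc)
    finally show ?case .
  qed
  have bound: "\<forall>k. norm (w k $ i) \<le> \<bar>c\<bar> ^ k * l1_norm (w 0)"
    using order_trans[OF abs_nth_le_l1_norm decay] by simp
  have "(\<lambda>k. \<bar>c\<bar> ^ k * l1_norm (w 0)) \<longlonglongrightarrow> 0"
    using assms(2) by (intro tendsto_mult_left_zero LIMSEQ_power_zero) auto
  with bound have "(\<lambda>k. w k $ i) \<longlonglongrightarrow> 0"
    by (rule Lim_null_comparison[OF always_eventually])
  then show "(\<lambda>k. w k $ i) \<longlonglongrightarrow> 0 $ i"
    by simp
qed

lemma partial_sums_affine_recursion:
  assumes "linear f" and "x 0 = c" and "z 0 = c"
    and "\<And>k. x (Suc k) = x k + f (z k)"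
    and "\<And>k. z (Suc k) = f (z k)"
  shows "x (Suc k) = c + f (x k)"
proof (induction k)
  case 0
  then show ?case using assms(2-4) by simp
next
  case (Suc k)
  have "x (Suc (Suc k)) = c + f (x k) + f (z (Suc k))"
    using Suc assms(4) by simp
  also have "\<dots> = c + f (x (Suc k))"
    using assms(4,5) linear_add[OF assms(1)] by simp
  finally show ?case .
qed

theorem lemma1:
  fixes E :: "'n::finite \<Rightarrow> 'n \<Rightarrow> bool"
    and m :: real and xs :: "real^'n" and x z :: "nat \<Rightarrow> real^'n"
  assumes "CARD('n) \<ge> 2"
    and "\<forall>j. out_links E j \<noteq> {}"
    and "0 < m" and "m < 1"
    and "is_pagerank E m xs"
    and "x 0 = (\<chi> i. m / real CARD('n))"
    and "z 0 = (\<chi> i. m / real CARD('n))"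
    and "\<And>k. x (Suc k) = x k + (1 - m) *\<^sub>R (hyperlink E *v z k)"
    and "\<And>k. z (Suc k) = (1 - m) *\<^sub>R (hyperlink E *v z k)"
  shows "z \<longlonglongrightarrow> 0
         \<and> (\<forall>k. \<forall>i. x k $ i \<le> x (Suc k) $ i \<and> x (Suc k) $ i \<le> xs $ i)
         \<and> x \<longlonglongrightarrow> xs"
proof -
  define A where "A = hyperlink E"
  define f where "f v = (1 - m) *\<^sub>R (A *v v)" for v
  have A: "column_stochastic A" and step: "\<bar>1 - m\<bar> < 1"
    using column_stochastic_hyperlink[OF assms(2)] assms(3,4) by (auto simp: A_def)
  have "linear f"
    unfolding f_def by (intro linear_compose_scale_right matrix_vector_mul_linear)
  then have x_step: "x (Suc k) = (\<chi> i. m / real CARD('n)) + f (x k)" for k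
    using partial_sums_affine_recursion[of f x _ z] assms(6-9) by (simp add: f_def A_def)
  have "xs - x (Suc k) = f (xs - x k)" for k
    using assms(5) x_step[of k] linear_diff[OF \<open>linear f\<close>]
    by (simp add: is_pagerank_def f_def A_def algebra_simps)
  then have "(\<lambda>k. xs - x k) \<longlonglongrightarrow> 0"
    using column_stochastic_iteration_tendsto_zero[OF A step] by (simp add: f_def)
  then have x_lim: "x \<longlonglongrightarrow> xs"
    using tendsto_diff[OF tendsto_const[of xs]] by fastforce
  have z_nonneg: "0 \<le> z k $ i" for k i
    using A assms(3,4,7,9)
    by (induction k arbitrary: i) (auto simp: A_def column_stochastic_def matrix_vector_mult_nonneg)
  have x_mono: "x k $ i \<le> x (Suc k) $ i" for k i
    using z_nonneg[of "Suc k" i] assms(8,9) by simp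
  have "x k $ i \<le> xs $ i" for k i
    using incseq_le[OF incseq_SucI tendsto_vec_nth[OF x_lim]] x_mono by auto
  then show ?thesis
    using column_stochastic_iteration_tendsto_zero[OF A step] assms(9) x_mono x_lim
    by (auto simp: A_def)
qed

end
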